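(* Let $M\ge2$ and $\bar\sigma>0$. Observe $\mathbf y=\mathbf f+\boldsymbol\xi\in\mathbf R^n$, where $\xi_1,\dots,\xi_n$ are i.i.d., centered with variance $\sigma^2$, and satisfy, for all $\mathbf b\in\mathbf R^n$, all $n\times n$ real matrices $B$ and all $x>0$, \[\mathbb P\big(\boldsymbol\xi^T\mathbf b>\bar\sigma\|\mathbf b\|_2\sqrt{2x}\big)\le e^{-x},\qquad \mathbb P\big(\boldsymbol\xi^TB\boldsymbol\xi-\sigma^2\mathrm{Tr}B>2\sigma\bar\sigma\|B\|_F\sqrt x+2\bar\sigma^2\|B\|_{op}x\big)\le e^{-x}.\] For $j=1,\dots,M$ let $\hat{\boldsymbol\mu}_j=A_j\mathbf y+\mathbf b_j$ with deterministic $n\times n$ matrices with $\|A_j\|_{op}\le1$ and deterministic $\mathbf b_j\in\mathbf R^n$. Let $\hat{\boldsymbol\theta}_{\mathrm{pen}}\in\arg\min_{\boldsymbol\theta\in\Lambda^M}H_{\mathrm{pen}}(\boldsymbol\theta)$. Then for all $x>0$, with probability at least $1-2e^{-x}$, \[\|\hat{\boldsymbol\mu}_{\hat{\boldsymbol\theta}_{\mathrm{pen}}}-\mathbf f\|_2^2\le\min_{j=1,\dots,M}\|\hat{\boldsymbol\mu}_j-\mathbf f\|_2^2+46\bar\sigma^2(2\log M+x).\]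
   Context: $\|\cdot\|_F$ Frobenius norm, $\|\cdot\|_{op}$ operator norm. $\Lambda^M=\{\boldsymbol\theta\in\mathbf R^M:\sum_j\theta_j=1,\theta_j\ge0\}$. For $\boldsymbol\theta\in\Lambda^M$: $A_{\boldsymbol\theta}=\sum_j\theta_jA_j$, $\mathbf b_{\boldsymbol\theta}=\sum_j\theta_j\mathbf b_j$, $\hat{\boldsymbol\mu}_{\boldsymbol\theta}=A_{\boldsymbol\theta}\mathbf y+\mathbf b_{\boldsymbol\theta}$. $C_p(\boldsymbol\theta)=\|\hat{\boldsymbol\mu}_{\boldsymbol\theta}\|_2^2-2\mathbf y^T\hat{\boldsymbol\mu}_{\boldsymbol\theta}+2\sigma^2\mathrm{Tr}(A_{\boldsymbol\theta})$, $\mathrm{pen}(\boldsymbol\theta)=\sum_j\theta_j\|\hat{\boldsymbol\mu}_{\boldsymbol\theta}-\hat{\boldsymbol\mu}_j\|_2^2$, $H_{\mathrm{pen}}=C_p+\tfrac12\mathrm{pen}$. *)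

theory Defs
  imports "HOL-Analysis.Analysis" "HOL-Probability.Probability"
begin

definition frob_norm :: "real^'n^'n \<Rightarrow> real" where
  "frob_norm B = sqrt (\<Sum>i\<in>UNIV. \<Sum>j\<in>UNIV. (B $ i $ j)^2)"

definition op_norm :: "real^'n^'n \<Rightarrow> real" where
  "op_norm B = onorm (\<lambda>v. B *v v)"

definition simplexM :: "(real^'m) set" where
  "simplexM = {\<theta>. (\<forall>j. \<theta> $ j \<ge> 0) \<and> (\<Sum>j\<in>UNIV. \<theta> $ j) = 1}"

definition A_th :: "('m \<Rightarrow> real^'n^'n) \<Rightarrow> real^'m \<Rightarrow> real^'n^'n" where
  "A_th A \<theta> = (\<Sum>j\<in>UNIV. (\<theta> $ j) *\<^sub>R A j)"

definition b_th :: "('m \<Rightarrow> real^'n) \<Rightarrow> real^'m \<Rightarrow> real^'n" where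
  "b_th b \<theta> = (\<Sum>j\<in>UNIV. (\<theta> $ j) *\<^sub>R b j)"

definition mu_th :: "('m \<Rightarrow> real^'n^'n) \<Rightarrow> ('m \<Rightarrow> real^'n) \<Rightarrow> real^'n \<Rightarrow> real^'m \<Rightarrow> real^'n" where
  "mu_th A b y \<theta> = A_th A \<theta> *v y + b_th b \<theta>"

definition mu_j :: "('m \<Rightarrow> real^'n^'n) \<Rightarrow> ('m \<Rightarrow> real^'n) \<Rightarrow> real^'n \<Rightarrow> 'm \<Rightarrow> real^'n" where
  "mu_j A b y j = A j *v y + b j"

definition Cp :: "real \<Rightarrow> ('m \<Rightarrow> real^'n^'n) \<Rightarrow> ('m \<Rightarrow> real^'n) \<Rightarrow> real^'n \<Rightarrow> real^'m \<Rightarrow> real" where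
  "Cp \<sigma> A b y \<theta> = (norm (mu_th A b y \<theta>))^2 - 2 * (y \<bullet> mu_th A b y \<theta>)
      + 2 * \<sigma>^2 * trace (A_th A \<theta>)"

definition pen :: "('m \<Rightarrow> real^'n^'n) \<Rightarrow> ('m \<Rightarrow> real^'n) \<Rightarrow> real^'n \<Rightarrow> real^'m \<Rightarrow> real" where
  "pen A b y \<theta> = (\<Sum>j\<in>UNIV. (\<theta> $ j) * (norm (mu_th A b y \<theta> - mu_j A b y j))^2)"

definition H_pen :: "real \<Rightarrow> ('m \<Rightarrow> real^'n^'n) \<Rightarrow> ('m \<Rightarrow> real^'n) \<Rightarrow> real^'n \<Rightarrow> real^'m \<Rightarrow> real" where
  "H_pen \<sigma> A b y \<theta> = Cp \<sigma> A b y \<theta> + pen A b y \<theta> / 2"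

end

theory Submission
  imports Defs
begin

text \<open>On the simplex, \<open>H\<^sub>p\<^sub>e\<^sub>n\<close> is half the squared norm of \<open>\<mu>\<^sub>\<theta>\<close> plus a function
  linear in \<open>\<theta>\<close>, so moving the minimiser \<open>\<theta>\<close> towards any vertex \<open>k\<close> cannot decrease it;
  this gives a gain of \<open>\<parallel>\<mu>\<^sub>k - \<mu>\<^sub>\<theta>\<parallel>\<^sup>2/2\<close> over the unbiased risk comparison.
  What remains is the noise in the difference of the risk estimates of \<open>\<mu>\<^sub>j\<close> and \<open>\<mu>\<^sub>k\<close>,
  a quadratic plus a linear form in \<open>\<xi>\<close>. Subtracting a quarter of \<open>\<parallel>\<mu>\<^sub>j - \<mu>\<^sub>k\<parallel>\<^sup>2\<close>
  makes both forms small enough that the two tail bounds at level \<open>x + 2 log M\<close>, combined by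
  a union bound over the \<open>M\<^sup>2\<close> pairs, bound it by \<open>23 \<sigma>\<^sup>2 (x + 2 log M)\<close> up to the quarter;
  averaging over \<open>j\<close> with the weights \<open>\<theta>\<close> then absorbs that quarter into the gain.\<close>

lemma nonneg_of_quadratic_lower_bound:
  fixes G q :: real
  assumes q: "q \<ge> 0" and h: "\<And>s. 0 < s \<Longrightarrow> s \<le> 1 \<Longrightarrow> 0 \<le> s * G + s^2 / 2 * q"
  shows "G \<ge> 0"
proof (rule ccontr)
  assume "\<not> G \<ge> 0"
  hence G: "G < 0" by simp
  define s where "s = - G / (q - G)"
  have d: "q - G > 0" using G q by simp
  have s0: "0 < s" and s1: "s \<le> 1" using G q d by (auto simp: s_def field_simps)
  have "0 \<le> s * (G + s / 2 * q)"
    using h[OF s0 s1] by (simp add: power2_eq_square algebra_simps)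
  hence "0 \<le> G + s / 2 * q" using s0 by (simp add: zero_le_mult_iff)
  moreover have "s * q \<le> - G" using G q d by (simp add: s_def field_simps mult_left_mono)
  ultimately show False using G by linarith
qed

lemma mult_minus_quarter_sq_le:
  fixes a c :: real
  shows "a * c - a^2 / 4 \<le> c^2"
proof -
  have "0 \<le> (a / 2 - c)^2" by simp
  then show ?thesis by (simp add: power2_eq_square algebra_simps)
qed

lemma sum_weighted_norm_diff_sq:
  fixes \<mu> :: "'m::finite \<Rightarrow> 'v::real_inner" and w :: "'m \<Rightarrow> real" and p :: 'v
  assumes "(\<Sum>j\<in>UNIV. w j) = 1"
  shows "(\<Sum>j\<in>UNIV. w j * (norm (p - \<mu> j))^2)
     = (norm (p - (\<Sum>j\<in>UNIV. w j *\<^sub>R \<mu> j)))^2 + (\<Sum>j\<in>UNIV. w j * (norm (\<mu> j))^2)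
       - (norm (\<Sum>j\<in>UNIV. w j *\<^sub>R \<mu> j))^2"
proof -
  have e: "\<And>j. (norm (p - \<mu> j))^2 = (norm p)^2 - 2 * (p \<bullet> \<mu> j) + (norm (\<mu> j))^2"
    by (simp add: power2_norm_eq_inner inner_diff_left inner_diff_right inner_commute)
  have "(\<Sum>j\<in>UNIV. w j * (norm (p - \<mu> j))^2)
     = (\<Sum>j\<in>UNIV. w j) * (norm p)^2 - 2 * (p \<bullet> (\<Sum>j\<in>UNIV. w j *\<^sub>R \<mu> j))
       + (\<Sum>j\<in>UNIV. w j * (norm (\<mu> j))^2)"
    by (simp add: e algebra_simps sum.distrib sum_subtractf sum_distrib_left sum_distrib_right
        inner_sum_right)
  then show ?thesis using assms
    by (simp add: power2_norm_eq_inner inner_diff_left inner_diff_right inner_commute)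
qed

section \<open>Minimising a quadratic-plus-linear function on the simplex\<close>

lemma axis_in_simplexM: "axis k 1 \<in> simplexM"
  by (simp add: simplexM_def axis_def)

lemma convex_simplexM: "convex simplexM"
  by (auto simp: convex_def simplexM_def sum.distrib sum_distrib_left[symmetric])

lemma sum_scaleR_segment_to_axis:
  fixes g :: "'m::finite \<Rightarrow> 'v::real_vector" and \<theta> :: "real^'m"
  shows "(\<Sum>j\<in>UNIV. (((1 - s) *\<^sub>R \<theta> + s *\<^sub>R axis k 1) $ j) *\<^sub>R g j)
       = (1 - s) *\<^sub>R (\<Sum>j\<in>UNIV. \<theta> $ j *\<^sub>R g j) + s *\<^sub>R g k"
proof -
  have "\<And>j. (s * axis k 1 $ j) *\<^sub>R g j = (if j = k then s *\<^sub>R g k else 0)"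
    by (simp add: axis_def)
  then show ?thesis
    by (simp add: scaleR_add_left sum.distrib scaleR_sum_right)
qed

lemma simplex_quadratic_min_gap:
  fixes \<mu> :: "'m::finite \<Rightarrow> 'v::real_inner" and h :: "'m \<Rightarrow> real"
  defines "Q \<equiv> \<lambda>\<theta>::real^'m. (norm (\<Sum>j\<in>UNIV. \<theta> $ j *\<^sub>R \<mu> j))^2 / 2 + (\<Sum>j\<in>UNIV. \<theta> $ j * h j)"
  assumes th: "\<theta>h \<in> simplexM" and min: "\<forall>\<theta>\<in>simplexM. Q \<theta>h \<le> Q \<theta>"
  shows "(norm (\<mu> k - (\<Sum>j\<in>UNIV. \<theta>h $ j *\<^sub>R \<mu> j)))^2 / 2 \<le> (norm (\<mu> k))^2 / 2 + h k - Q \<theta>h"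
proof -
  define m where "m = (\<Sum>j\<in>UNIV. \<theta>h $ j *\<^sub>R \<mu> j)"
  define L where "L = (\<Sum>j\<in>UNIV. \<theta>h $ j * h j)"
  define d where "d = \<mu> k - m"
  define G where "G = m \<bullet> d + h k - L"
  \<comment> \<open>\<open>G\<close> is the slope of \<open>Q\<close> at \<open>\<theta>h\<close> in the direction of the vertex \<open>k\<close>.\<close>
  have Q\<theta>h: "Q \<theta>h = (norm m)^2 / 2 + L"
    by (simp add: Q_def m_def L_def)
  have seg: "Q ((1 - s) *\<^sub>R \<theta>h + s *\<^sub>R axis k 1) - Q \<theta>h = s * G + s^2 / 2 * (norm d)^2" for s
  proof -
    have "(\<Sum>j\<in>UNIV. ((1 - s) *\<^sub>R \<theta>h + s *\<^sub>R axis k 1) $ j *\<^sub>R \<mu> j) = m + s *\<^sub>R d"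
      using sum_scaleR_segment_to_axis[of s \<theta>h k \<mu>] by (simp add: m_def d_def algebra_simps)
    moreover have "(\<Sum>j\<in>UNIV. ((1 - s) *\<^sub>R \<theta>h + s *\<^sub>R axis k 1) $ j * h j) = (1 - s) * L + s * h k"
      using sum_scaleR_segment_to_axis[of s \<theta>h k h] by (simp add: L_def)
    ultimately have "Q ((1 - s) *\<^sub>R \<theta>h + s *\<^sub>R axis k 1) = (norm (m + s *\<^sub>R d))^2 / 2 + ((1 - s) * L + s * h k)"
      unfolding Q_def by simp
    moreover have "(norm (m + s *\<^sub>R d))^2 = (norm m)^2 + 2 * s * (m \<bullet> d) + s^2 * (norm d)^2"
      unfolding power2_norm_eq_inner
      by (simp add: inner_add_left inner_add_right inner_commute power2_eq_square algebra_simps)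
    ultimately show ?thesis by (simp add: Q\<theta>h G_def algebra_simps)
  qed
  have "G \<ge> 0"
  proof (rule nonneg_of_quadratic_lower_bound)
    show "(norm d)^2 \<ge> 0" by simp
    fix s :: real
    assume "0 < s" "s \<le> 1"
    then have "(1 - s) *\<^sub>R \<theta>h + s *\<^sub>R axis k 1 \<in> simplexM"
      using convexD[OF convex_simplexM th axis_in_simplexM, of "1 - s" s] by simp
    then show "0 \<le> s * G + s^2 / 2 * (norm d)^2" using min seg[of s] by force
  qed
  moreover have "(norm (\<mu> k))^2 / 2 + h k - Q \<theta>h = G + (norm d)^2 / 2"
    unfolding Q\<theta>h G_def d_def power2_norm_eq_inner
    by (simp add: inner_diff_left inner_diff_right inner_commute field_simps)
  ultimately show ?thesis by (simp add: d_def m_def)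
qed

lemma sum_scaleR_matrix_vector_mult:
  fixes A :: "'m \<Rightarrow> real^'n^'n"
  shows "(\<Sum>j\<in>S. c j *\<^sub>R A j) *v y = (\<Sum>j\<in>S. c j *\<^sub>R (A j *v y))"
  by (induct S rule: infinite_finite_induct)
     (simp_all add: matrix_vector_mult_add_rdistrib scaleR_matrix_vector_assoc)

lemma trace_scaleR: "trace (a *\<^sub>R (B::real^'n^'n)) = a * trace B"
  by (simp add: trace_def sum_distrib_left)

lemma trace_sum_scaleR:
  fixes A :: "'m \<Rightarrow> real^'n^'n"
  shows "trace (\<Sum>j\<in>S. c j *\<^sub>R A j) = (\<Sum>j\<in>S. c j * trace (A j))"
  by (induct S rule: infinite_finite_induct)
     (simp_all add: trace_add trace_def sum.distrib sum_distrib_left)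

lemma mu_th_eq_sum: "mu_th A b y \<theta> = (\<Sum>j\<in>UNIV. \<theta> $ j *\<^sub>R mu_j A b y j)"
  unfolding mu_th_def A_th_def b_th_def mu_j_def
  by (simp add: sum_scaleR_matrix_vector_mult scaleR_add_right sum.distrib)

text \<open>By the variance identity \<open>pen \<theta> = \<Sum>\<theta>\<^sub>j \<parallel>\<mu>\<^sub>j\<parallel>\<^sup>2 - \<parallel>\<mu>\<^sub>\<theta>\<parallel>\<^sup>2\<close>, half of the
  quadratic term of \<open>C\<^sub>p\<close> cancels on the simplex.\<close>
lemma H_pen_on_simplexM:
  assumes "\<theta> \<in> simplexM"
  shows "H_pen \<sigma> A b y \<theta> = (norm (\<Sum>j\<in>UNIV. \<theta> $ j *\<^sub>R mu_j A b y j))^2 / 2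
     + (\<Sum>j\<in>UNIV. \<theta> $ j * ((norm (mu_j A b y j))^2 / 2 - 2 * (y \<bullet> mu_j A b y j)
                                + 2 * \<sigma>^2 * trace (A j)))"
proof -
  define \<mu> where "\<mu> = mu_j A b y"
  define m where "m = (\<Sum>j\<in>UNIV. \<theta> $ j *\<^sub>R \<mu> j)"
  have "(\<Sum>j\<in>UNIV. \<theta> $ j) = 1" using assms by (simp add: simplexM_def)
  then have "pen A b y \<theta> = (\<Sum>j\<in>UNIV. \<theta> $ j * (norm (\<mu> j))^2) - (norm m)^2"
    using sum_weighted_norm_diff_sq[of "($) \<theta>" m \<mu>]
    by (simp add: pen_def mu_th_eq_sum \<mu>_def m_def)
  moreover have "y \<bullet> m = (\<Sum>j\<in>UNIV. \<theta> $ j * (y \<bullet> \<mu> j))"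
    by (simp add: m_def inner_sum_right)
  ultimately show ?thesis
    unfolding H_pen_def Cp_def mu_th_eq_sum A_th_def trace_sum_scaleR \<mu>_def[symmetric] m_def[symmetric]
    by (simp add: algebra_simps sum.distrib sum_subtractf sum_distrib_left
        sum_divide_distrib[symmetric])
qed

lemma H_pen_minimiser_oracle_inequality:
  fixes f \<xi> :: "real^'n" and A :: "'m::finite \<Rightarrow> real^'n^'n" and b :: "'m \<Rightarrow> real^'n"
  defines "\<mu> \<equiv> mu_j A b (f + \<xi>)"
  assumes th: "\<theta>h \<in> simplexM"
    and min: "\<forall>\<theta>\<in>simplexM. H_pen \<sigma> A b (f + \<xi>) \<theta>h \<le> H_pen \<sigma> A b (f + \<xi>) \<theta>"
    and excess: "\<And>j. \<xi> \<bullet> (\<mu> j - \<mu> k) - \<sigma>^2 * (trace (A j) - trace (A k))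
                    \<le> (norm (\<mu> j - \<mu> k))^2 / 4 + K"
  shows "(norm (mu_th A b (f + \<xi>) \<theta>h - f))^2 \<le> (norm (\<mu> k - f))^2 + 2 * K"
proof -
  define h where "h j = (norm (\<mu> j))^2 / 2 - 2 * ((f + \<xi>) \<bullet> \<mu> j) + 2 * \<sigma>^2 * trace (A j)" for j
  define m where "m = (\<Sum>j\<in>UNIV. \<theta>h $ j *\<^sub>R \<mu> j)"
  define S where "S = (\<Sum>j\<in>UNIV. \<theta>h $ j * (norm (\<mu> j))^2)"
  define T where "T = (\<Sum>j\<in>UNIV. \<theta>h $ j * trace (A j))"
  have weights: "\<forall>j. \<theta>h $ j \<ge> 0" "(\<Sum>j\<in>UNIV. \<theta>h $ j) = 1"
    using th by (auto simp: simplexM_def)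
  have linear_part: "(\<Sum>j\<in>UNIV. \<theta>h $ j * h j) = S / 2 - 2 * ((f + \<xi>) \<bullet> m) + 2 * \<sigma>^2 * T"
    by (simp add: h_def S_def T_def m_def inner_sum_right algebra_simps sum.distrib
        sum_subtractf sum_distrib_left sum_divide_distrib)
  have H_pen_eq: "H_pen \<sigma> A b (f + \<xi>) \<theta>
      = (norm (\<Sum>j\<in>UNIV. \<theta> $ j *\<^sub>R \<mu> j))^2 / 2 + (\<Sum>j\<in>UNIV. \<theta> $ j * h j)"
    if "\<theta> \<in> simplexM" for \<theta>
    using H_pen_on_simplexM[OF that] by (simp add: h_def \<mu>_def)
  have minimal: "\<forall>\<theta>\<in>simplexM. (norm m)^2 / 2 + (\<Sum>j\<in>UNIV. \<theta>h $ j * h j)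
      \<le> (norm (\<Sum>j\<in>UNIV. \<theta> $ j *\<^sub>R \<mu> j))^2 / 2 + (\<Sum>j\<in>UNIV. \<theta> $ j * h j)"
    using min th by (simp add: H_pen_eq m_def)
  have gap: "(norm (\<mu> k - m))^2 / 2
      \<le> (norm (\<mu> k))^2 / 2 + h k - ((norm m)^2 / 2 + (\<Sum>j\<in>UNIV. \<theta>h $ j * h j))"
    using simplex_quadratic_min_gap[of \<theta>h \<mu> h k] th minimal by (simp add: m_def)
  have average: "\<xi> \<bullet> (m - \<mu> k) - \<sigma>^2 * (T - trace (A k))
      \<le> ((norm (\<mu> k - m))^2 + S - (norm m)^2) / 4 + K"
  proof -
    have "(\<Sum>j\<in>UNIV. \<theta>h $ j * (\<xi> \<bullet> (\<mu> j - \<mu> k) - \<sigma>^2 * (trace (A j) - trace (A k))))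
        \<le> (\<Sum>j\<in>UNIV. \<theta>h $ j * ((norm (\<mu> k - \<mu> j))^2 / 4 + K))"
      using excess weights(1) by (intro sum_mono mult_left_mono) (auto simp: norm_minus_commute)
    moreover have "(\<Sum>j\<in>UNIV. \<theta>h $ j * (\<xi> \<bullet> (\<mu> j - \<mu> k) - \<sigma>^2 * (trace (A j) - trace (A k))))
        = \<xi> \<bullet> (m - \<mu> k) - \<sigma>^2 * (T - trace (A k))"
    proof -
      have "(\<Sum>j\<in>UNIV. \<theta>h $ j * (\<xi> \<bullet> (\<mu> j - \<mu> k) - \<sigma>^2 * (trace (A j) - trace (A k))))
          = (\<Sum>j\<in>UNIV. \<theta>h $ j * (\<xi> \<bullet> \<mu> j) - \<sigma>^2 * (\<theta>h $ j * trace (A j))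
                       - \<theta>h $ j * (\<xi> \<bullet> \<mu> k - \<sigma>^2 * trace (A k)))"
        by (rule sum.cong) (simp_all add: inner_diff_right algebra_simps)
      then show ?thesis
        by (simp add: sum_subtractf sum_distrib_left[symmetric] sum_distrib_right[symmetric]
            weights(2) m_def T_def inner_sum_right inner_diff_right right_diff_distrib)
    qed
    moreover have "(\<Sum>j\<in>UNIV. \<theta>h $ j * ((norm (\<mu> k - \<mu> j))^2 / 4 + K))
        = ((norm (\<mu> k - m))^2 + S - (norm m)^2) / 4 + K"
    proof -
      have "(\<Sum>j\<in>UNIV. \<theta>h $ j * ((norm (\<mu> k - \<mu> j))^2 / 4 + K))
          = (\<Sum>j\<in>UNIV. \<theta>h $ j * (norm (\<mu> k - \<mu> j))^2 / 4 + K * \<theta>h $ j)"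
        by (rule sum.cong) (simp_all add: algebra_simps)
      then show ?thesis
        using sum_weighted_norm_diff_sq[OF weights(2), of "\<mu> k" \<mu>]
        by (simp add: sum.distrib sum_divide_distrib[symmetric] sum_distrib_left[symmetric]
            weights(2) m_def S_def)
    qed
    ultimately show ?thesis by simp
  qed
  have "(norm (m - f))^2 \<le> (norm (\<mu> k - f))^2 + 2 * K"
    using gap[unfolded linear_part] average unfolding h_def power2_norm_eq_inner
    by (simp add: inner_diff_left inner_diff_right inner_add_left inner_add_right inner_commute
        field_simps)
  then show ?thesis by (simp add: mu_th_eq_sum m_def \<mu>_def)
qed

lemma norm_matrix_vector_mult_le_op_norm:
  fixes D :: "real^'n^'n"
  shows "norm (D *v v) \<le> op_norm D * norm v"
  unfolding op_norm_def using onorm[OF matrix_vector_mul_bounded_linear, of D v] by simp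

lemma op_norm_le:
  fixes D :: "real^'n^'n"
  assumes "\<And>v. norm (D *v v) \<le> a * norm v"
  shows "op_norm D \<le> a"
  unfolding op_norm_def using assms by (intro onorm_le) auto

lemma op_norm_diff_le:
  fixes C D :: "real^'n^'n"
  shows "op_norm (C - D) \<le> op_norm C + op_norm D"
proof (rule op_norm_le)
  fix v :: "real^'n"
  have "norm ((C - D) *v v) \<le> norm (C *v v) + norm (D *v v)"
    by (simp add: matrix_vector_mult_diff_rdistrib norm_triangle_ineq4)
  also have "\<dots> \<le> (op_norm C + op_norm D) * norm v"
    using norm_matrix_vector_mult_le_op_norm[of C v] norm_matrix_vector_mult_le_op_norm[of D v]
    by (simp add: distrib_right)
  finally show "norm ((C - D) *v v) \<le> (op_norm C + op_norm D) * norm v" .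
qed

lemma inner_transpose_matrix_vector:
  fixes D :: "real^'n^'n"
  shows "x \<bullet> (transpose D *v u) = (D *v x) \<bullet> u"
  by (simp add: dot_lmul_matrix) (metis dot_lmul_matrix inner_commute)

lemma op_norm_transpose_le:
  fixes D :: "real^'n^'n"
  shows "op_norm (transpose D) \<le> op_norm D"
proof (rule op_norm_le)
  fix u :: "real^'n"
  define w where "w = transpose D *v u"
  have "(norm w)^2 = (D *v w) \<bullet> u"
    by (simp add: power2_norm_eq_inner w_def inner_transpose_matrix_vector del: transpose_matrix_vector)
  also have "\<dots> \<le> norm (D *v w) * norm u" by (rule norm_cauchy_schwarz)
  also have "\<dots> \<le> op_norm D * norm w * norm u"
    by (simp add: mult_right_mono norm_matrix_vector_mult_le_op_norm)
  finally have "norm w * norm w \<le> (op_norm D * norm u) * norm w"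
    by (simp add: power2_eq_square algebra_simps)
  then show "norm w \<le> op_norm D * norm u"
    by (cases "norm w = 0") (auto simp: op_norm_def onorm_pos_le matrix_vector_mul_bounded_linear)
qed

lemma frob_norm_nonneg: "frob_norm B \<ge> 0"
  unfolding frob_norm_def by (simp add: sum_nonneg)

lemma frob_norm_sq_eq_sum_columns:
  fixes B :: "real^'n^'n"
  shows "(frob_norm B)^2 = (\<Sum>j\<in>UNIV. (norm (B *v axis j 1))^2)"
proof -
  have "(frob_norm B)^2 = (\<Sum>i\<in>UNIV. \<Sum>j\<in>UNIV. (B $ i $ j)^2)"
    unfolding frob_norm_def by (simp add: sum_nonneg)
  also have "\<dots> = (\<Sum>j\<in>UNIV. \<Sum>i\<in>UNIV. (B $ i $ j)^2)" by (rule sum.swap)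
  also have "\<dots> = (\<Sum>j\<in>UNIV. (norm (B *v axis j 1))^2)"
    unfolding power2_norm_eq_inner
    by (simp add: inner_vec_def power2_eq_square matrix_vector_mult_basis column_def)
  finally show ?thesis .
qed

lemma trace_transpose_mult_self:
  fixes D :: "real^'n^'n"
  shows "trace (transpose D ** D) = (frob_norm D)^2"
proof -
  have "trace (transpose D ** D) = (\<Sum>i\<in>UNIV. \<Sum>k\<in>UNIV. (D $ k $ i)^2)"
    by (simp add: trace_def matrix_matrix_mult_def transpose_def power2_eq_square)
  also have "\<dots> = (\<Sum>k\<in>UNIV. \<Sum>i\<in>UNIV. (D $ k $ i)^2)" by (rule sum.swap)
  also have "\<dots> = (frob_norm D)^2" unfolding frob_norm_def by (simp add: sum_nonneg)
  finally show ?thesis .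
qed

section \<open>The pairwise noise excess\<close>

lemma norm_quarter_correction_le:
  fixes D :: "real^'n^'n"
  assumes "op_norm D \<le> 2"
  shows "norm ((D - (1/4) *\<^sub>R (transpose D ** D)) *v v) \<le> 3/2 * norm (D *v v)"
proof -
  have "norm ((D - (1/4) *\<^sub>R (transpose D ** D)) *v v)
      \<le> norm (D *v v) + 1/4 * norm (transpose D *v (D *v v))"
    using norm_triangle_ineq4[of "D *v v" "(1/4) *\<^sub>R (transpose D *v (D *v v))"]
    by (simp add: matrix_vector_mult_diff_rdistrib scaleR_matrix_vector_assoc[symmetric]
        matrix_vector_mul_assoc del: transpose_matrix_vector)
  also have "\<dots> \<le> norm (D *v v) + 1/4 * (2 * norm (D *v v))"
    using norm_matrix_vector_mult_le_op_norm[of "transpose D" "D *v v"] op_norm_transpose_le[of D]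
      assms mult_right_mono[of "op_norm (transpose D)" 2 "norm (D *v v)"]
    by (simp del: transpose_matrix_vector)
  finally show ?thesis by simp
qed

lemma op_norm_quarter_correction_le:
  fixes D :: "real^'n^'n"
  assumes "op_norm D \<le> 2"
  shows "op_norm (D - (1/4) *\<^sub>R (transpose D ** D)) \<le> 3"
proof (rule op_norm_le)
  fix v :: "real^'n"
  have "norm (D *v v) \<le> 2 * norm v"
    using norm_matrix_vector_mult_le_op_norm[of D v] assms mult_right_mono[of _ 2 "norm v"]
    by fastforce
  then show "norm ((D - (1/4) *\<^sub>R (transpose D ** D)) *v v) \<le> 3 * norm v"
    using norm_quarter_correction_le[OF assms, of v] by simp
qed

lemma frob_norm_quarter_correction_le:
  fixes D :: "real^'n^'n"
  assumes "op_norm D \<le> 2"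
  shows "frob_norm (D - (1/4) *\<^sub>R (transpose D ** D)) \<le> 3/2 * frob_norm D"
proof (rule power2_le_imp_le)
  have "(frob_norm (D - (1/4) *\<^sub>R (transpose D ** D)))^2
      \<le> (\<Sum>j\<in>UNIV. (3/2 * norm (D *v axis j 1))^2)"
    unfolding frob_norm_sq_eq_sum_columns
    by (intro sum_mono power_mono norm_quarter_correction_le[OF assms]) auto
  also have "\<dots> = (3/2)^2 * (\<Sum>j\<in>UNIV. (norm (D *v axis j 1))^2)"
    unfolding power_mult_distrib by (rule sum_distrib_left[symmetric])
  also have "\<dots> = (3/2 * frob_norm D)^2"
    unfolding frob_norm_sq_eq_sum_columns[of D, symmetric] power_mult_distrib ..
  finally show "(frob_norm (D - (1/4) *\<^sub>R (transpose D ** D)))^2 \<le> (3/2 * frob_norm D)^2" .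
  show "0 \<le> 3/2 * frob_norm D" by (simp add: frob_norm_nonneg)
qed

text \<open>\<open>B\<close> and \<open>w\<close> are chosen so that the excess, minus a quarter of \<open>\<parallel>D \<xi> + c\<parallel>\<^sup>2\<close>,
  is a centred quadratic form plus a linear form in \<open>\<xi>\<close>, each offset by a negative square
  that absorbs its deviation term.\<close>
lemma noise_excess_le:
  fixes D :: "real^'n^'n" and \<xi> c :: "real^'n" and \<sigma> \<sigma>b t :: real
  defines "B \<equiv> D - (1/4) *\<^sub>R (transpose D ** D)"
    and "w \<equiv> c - (1/2) *\<^sub>R (transpose D *v c)"
  assumes D: "op_norm D \<le> 2" and \<sigma>: "\<sigma> \<ge> 0" and \<sigma>b: "\<sigma>b > 0" and t: "t > 0"
    and quad: "\<xi> \<bullet> (B *v \<xi>) - \<sigma>^2 * trace B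
                 \<le> 2 * \<sigma> * \<sigma>b * frob_norm B * sqrt t + 2 * \<sigma>b^2 * op_norm B * t"
    and lin: "\<xi> \<bullet> w \<le> \<sigma>b * norm w * sqrt (2 * t)"
  shows "\<xi> \<bullet> (D *v \<xi> + c) - \<sigma>^2 * trace D \<le> (norm (D *v \<xi> + c))^2 / 4 + 23 * \<sigma>b^2 * t"
proof -
  define F where "F = frob_norm D"
  have decomposition: "\<xi> \<bullet> (D *v \<xi> + c) - \<sigma>^2 * trace D - (norm (D *v \<xi> + c))^2 / 4
      = (\<xi> \<bullet> (B *v \<xi>) - \<sigma>^2 * trace B - \<sigma>^2 * F^2 / 4) + (\<xi> \<bullet> w - (norm c)^2 / 4)"
    unfolding B_def w_def F_def power2_norm_eq_inner
    by (simp add: matrix_vector_mult_diff_rdistrib scaleR_matrix_vector_assoc[symmetric]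
        matrix_vector_mul_assoc[symmetric] inner_transpose_matrix_vector trace_sub trace_scaleR
        trace_transpose_mult_self
        inner_diff_right inner_add_left inner_add_right inner_commute algebra_simps
        del: transpose_matrix_vector)
  have "\<xi> \<bullet> (B *v \<xi>) - \<sigma>^2 * trace B - \<sigma>^2 * F^2 / 4 \<le> 15 * \<sigma>b^2 * t"
  proof -
    have "2 * \<sigma> * \<sigma>b * frob_norm B * sqrt t \<le> 2 * \<sigma> * \<sigma>b * (3/2 * F) * sqrt t"
      using frob_norm_quarter_correction_le[OF D] \<sigma> \<sigma>b t
      by (intro mult_left_mono mult_right_mono) (auto simp: B_def F_def)
    then have "2 * \<sigma> * \<sigma>b * frob_norm B * sqrt t \<le> (\<sigma> * F) * (3 * \<sigma>b * sqrt t)"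
      by (simp add: algebra_simps)
    moreover have "2 * \<sigma>b^2 * op_norm B * t \<le> 2 * \<sigma>b^2 * 3 * t"
      using op_norm_quarter_correction_le[OF D] t
      by (intro mult_right_mono mult_left_mono) (auto simp: B_def)
    moreover have "(\<sigma> * F) * (3 * \<sigma>b * sqrt t) - \<sigma>^2 * F^2 / 4 \<le> 9 * \<sigma>b^2 * t"
      using mult_minus_quarter_sq_le[of "\<sigma> * F" "3 * \<sigma>b * sqrt t"] t
      by (simp add: power_mult_distrib)
    ultimately show ?thesis using quad by linarith
  qed
  moreover have "\<xi> \<bullet> w - (norm c)^2 / 4 \<le> 8 * \<sigma>b^2 * t"
  proof -
    have "norm w \<le> norm c + 1/2 * norm (transpose D *v c)"
      using norm_triangle_ineq4[of c "(1/2) *\<^sub>R (transpose D *v c)"]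
      by (simp add: w_def del: transpose_matrix_vector)
    also have "\<dots> \<le> 2 * norm c"
      using norm_matrix_vector_mult_le_op_norm[of "transpose D" c] op_norm_transpose_le[of D] D
        mult_right_mono[of "op_norm (transpose D)" 2 "norm c"]
      by (simp del: transpose_matrix_vector)
    finally have "\<sigma>b * norm w * sqrt (2 * t) \<le> norm c * (2 * sqrt 2 * \<sigma>b * sqrt t)"
      using \<sigma>b t by (simp add: real_sqrt_mult mult_left_mono mult_right_mono mult.assoc mult.left_commute)
    moreover have "norm c * (2 * sqrt 2 * \<sigma>b * sqrt t) - (norm c)^2 / 4 \<le> 8 * \<sigma>b^2 * t"
      using mult_minus_quarter_sq_le[of "norm c" "2 * sqrt 2 * \<sigma>b * sqrt t"] t
      by (simp add: power_mult_distrib)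
    ultimately show ?thesis using lin by linarith
  qed
  ultimately show ?thesis using decomposition by linarith
qed

section \<open>The high-probability event\<close>

lemma borel_measurable_vec_components:
  fixes \<xi> :: "'w \<Rightarrow> real^'n"
  assumes "\<And>i. (\<lambda>\<omega>. \<xi> \<omega> $ i) \<in> borel_measurable M"
  shows "\<xi> \<in> borel_measurable M"
proof (rule borel_measurable_euclidean_space[THEN iffD2], rule ballI)
  fix e :: "real^'n"
  assume "e \<in> Basis"
  then obtain i where "e = axis i 1" using axis_inverse by blast
  then show "(\<lambda>\<omega>. \<xi> \<omega> \<bullet> e) \<in> borel_measurable M" using assms[of i] by (simp add: inner_axis)
qed

lemma borel_measurable_quadratic_form[measurable (raw)]:
  fixes \<xi> :: "'w \<Rightarrow> real^'n"
  assumes "\<xi> \<in> borel_measurable M"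
  shows "(\<lambda>\<omega>. \<xi> \<omega> \<bullet> (B *v \<xi> \<omega>)) \<in> borel_measurable M"
  using borel_measurable_inner[OF assms borel_measurable_continuous_on[OF
        linear_continuous_on[OF matrix_vector_mul_bounded_linear] assms]] .

lemma (in prob_space) prob_avoiding_finite_family_ge:
  fixes r :: real
  assumes "finite I" and "\<And>i. i \<in> I \<Longrightarrow> F i \<in> events" and "\<And>i. i \<in> I \<Longrightarrow> prob (F i) \<le> r"
  shows "prob (space M - (\<Union>i\<in>I. F i)) \<ge> 1 - card I * r"
proof -
  have "prob (\<Union>i\<in>I. F i) \<le> (\<Sum>i\<in>I. prob (F i))"
    using assms by (intro measure_UNION_le) auto
  also have "\<dots> \<le> card I * r"
    using assms sum_bounded_above[of I "\<lambda>i. prob (F i)" r] by simp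
  finally show ?thesis
    using assms by (subst prob_compl) auto
qed

lemma pairwise_noise_excess_event:
  fixes P :: "'w measure" and \<xi> :: "'w \<Rightarrow> real^'n" and f :: "real^'n"
    and A :: "'m::finite \<Rightarrow> real^'n^'n" and b :: "'m \<Rightarrow> real^'n" and \<sigma> \<sigma>bar t :: real
  assumes "prob_space P"
    and meas: "\<And>i. (\<lambda>\<omega>. \<xi> \<omega> $ i) \<in> borel_measurable P"
    and \<sigma>: "\<sigma> \<ge> 0" and \<sigma>bar: "\<sigma>bar > 0" and t: "t > 0"
    and lin_tail: "\<And>bv::real^'n.
        measure P {\<omega> \<in> space P. \<xi> \<omega> \<bullet> bv > \<sigma>bar * norm bv * sqrt (2 * t)} \<le> exp (- t)"
    and quad_tail: "\<And>B::real^'n^'n.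
        measure P {\<omega> \<in> space P. \<xi> \<omega> \<bullet> (B *v \<xi> \<omega>) - \<sigma>^2 * trace B
           > 2 * \<sigma> * \<sigma>bar * frob_norm B * sqrt t + 2 * \<sigma>bar^2 * op_norm B * t} \<le> exp (- t)"
    and opA: "\<And>j. op_norm (A j) \<le> 1"
  shows "\<exists>E \<in> sets P. measure P E \<ge> 1 - 2 * real CARD('m)^2 * exp (- t) \<and>
    (\<forall>\<omega>\<in>E. \<forall>j k. \<xi> \<omega> \<bullet> (mu_j A b (f + \<xi> \<omega>) j - mu_j A b (f + \<xi> \<omega>) k)
                    - \<sigma>^2 * (trace (A j) - trace (A k))
                  \<le> (norm (mu_j A b (f + \<xi> \<omega>) j - mu_j A b (f + \<xi> \<omega>) k))^2 / 4 + 23 * \<sigma>bar^2 * t)"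
proof -
  interpret prob_space P by fact
  note [measurable] = borel_measurable_vec_components[OF meas]
  define D where "D p = A (fst p) - A (snd p)" for p :: "'m \<times> 'm"
  define c where "c p = D p *v f + b (fst p) - b (snd p)" for p
  define B where "B p = D p - (1/4) *\<^sub>R (transpose (D p) ** D p)" for p
  define w where "w p = c p - (1/2) *\<^sub>R (transpose (D p) *v c p)" for p
  define bad where "bad p =
    {\<omega> \<in> space P. \<xi> \<omega> \<bullet> (B p *v \<xi> \<omega>) - \<sigma>^2 * trace (B p)
       > 2 * \<sigma> * \<sigma>bar * frob_norm (B p) * sqrt t + 2 * \<sigma>bar^2 * op_norm (B p) * t}
    \<union> {\<omega> \<in> space P. \<xi> \<omega> \<bullet> w p > \<sigma>bar * norm (w p) * sqrt (2 * t)}" for p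
  define E where "E = space P - (\<Union>p. bad p)"
  have bad_events: "bad p \<in> events" for p
    unfolding bad_def by measurable
  have "prob (bad p) \<le> 2 * exp (- t)" for p
  proof -
    have "prob (bad p)
        \<le> prob {\<omega> \<in> space P. \<xi> \<omega> \<bullet> (B p *v \<xi> \<omega>) - \<sigma>^2 * trace (B p)
              > 2 * \<sigma> * \<sigma>bar * frob_norm (B p) * sqrt t + 2 * \<sigma>bar^2 * op_norm (B p) * t}
          + prob {\<omega> \<in> space P. \<xi> \<omega> \<bullet> w p > \<sigma>bar * norm (w p) * sqrt (2 * t)}"
      unfolding bad_def by (rule measure_Un_le) measurable
    then show ?thesis using quad_tail[of "B p"] lin_tail[of "w p"] by linarith
  qed
  then have "prob E \<ge> 1 - 2 * real CARD('m)^2 * exp (- t)"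
    using prob_avoiding_finite_family_ge[of UNIV bad "2 * exp (- t)"] bad_events
    by (simp add: E_def card_cartesian_product[of UNIV UNIV, unfolded UNIV_Times_UNIV]
        power2_eq_square algebra_simps)
  moreover have "E \<in> events" unfolding E_def using bad_events by auto
  moreover have "\<xi> \<omega> \<bullet> (mu_j A b (f + \<xi> \<omega>) j - mu_j A b (f + \<xi> \<omega>) k) - \<sigma>^2 * (trace (A j) - trace (A k))
      \<le> (norm (mu_j A b (f + \<xi> \<omega>) j - mu_j A b (f + \<xi> \<omega>) k))^2 / 4 + 23 * \<sigma>bar^2 * t"
    if "\<omega> \<in> E" for \<omega> j k
  proof -
    have "\<omega> \<in> space P" "\<omega> \<notin> bad (j, k)" using that by (auto simp: E_def)
    then have quad: "\<xi> \<omega> \<bullet> (B (j, k) *v \<xi> \<omega>) - \<sigma>^2 * trace (B (j, k))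
          \<le> 2 * \<sigma> * \<sigma>bar * frob_norm (B (j, k)) * sqrt t + 2 * \<sigma>bar^2 * op_norm (B (j, k)) * t"
      and lin: "\<xi> \<omega> \<bullet> w (j, k) \<le> \<sigma>bar * norm (w (j, k)) * sqrt (2 * t)"
      by (auto simp: bad_def not_less)
    have "op_norm (D (j, k)) \<le> 2"
      using op_norm_diff_le[of "A j" "A k"] opA[of j] opA[of k] by (simp add: D_def)
    from noise_excess_le[OF this \<sigma> \<sigma>bar t quad[unfolded B_def] lin[unfolded w_def]]
    have "\<xi> \<omega> \<bullet> (D (j, k) *v \<xi> \<omega> + c (j, k)) - \<sigma>^2 * trace (D (j, k))
        \<le> (norm (D (j, k) *v \<xi> \<omega> + c (j, k)))^2 / 4 + 23 * \<sigma>bar^2 * t" .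
    moreover have "D (j, k) *v \<xi> \<omega> + c (j, k) = mu_j A b (f + \<xi> \<omega>) j - mu_j A b (f + \<xi> \<omega>) k"
      by (simp add: D_def c_def mu_j_def matrix_vector_mult_diff_rdistrib
          matrix_vector_right_distrib algebra_simps)
    ultimately show ?thesis by (simp add: D_def trace_sub)
  qed
  ultimately show ?thesis by blast
qed

theorem theorem6p1:
  fixes P :: "'w measure"
    and \<xi> :: "'w \<Rightarrow> real^'n"
    and f :: "real^'n"
    and A :: "'m::finite \<Rightarrow> real^'n^'n"
    and b :: "'m \<Rightarrow> real^'n"
    and \<sigma> \<sigma>bar :: real
    and \<theta>hat :: "'w \<Rightarrow> real^'m"
  assumes "prob_space P"
    and M2: "CARD('m) \<ge> 2"
    and sbar: "\<sigma>bar > 0"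
    and sig: "\<sigma> \<ge> 0"
    and meas: "\<And>i. (\<lambda>\<omega>. \<xi> \<omega> $ i) \<in> borel_measurable P"
    and indep: "prob_space.indep_vars P (\<lambda>_. borel) (\<lambda>i \<omega>. \<xi> \<omega> $ i) UNIV"
    and ident: "\<And>i k. distr P borel (\<lambda>\<omega>. \<xi> \<omega> $ i) = distr P borel (\<lambda>\<omega>. \<xi> \<omega> $ k)"
    and sq_int: "\<And>i. integrable P (\<lambda>\<omega>. (\<xi> \<omega> $ i)^2)"
    and centered: "\<And>i. prob_space.expectation P (\<lambda>\<omega>. \<xi> \<omega> $ i) = 0"
    and variance: "\<And>i. prob_space.variance P (\<lambda>\<omega>. \<xi> \<omega> $ i) = \<sigma>^2"
    and lin_tail: "\<And>(bv::real^'n) x. x > 0 \<Longrightarrow>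
        measure P {\<omega> \<in> space P. \<xi> \<omega> \<bullet> bv > \<sigma>bar * norm bv * sqrt (2 * x)} \<le> exp (- x)"
    and quad_tail: "\<And>(B::real^'n^'n) x. x > 0 \<Longrightarrow>
        measure P {\<omega> \<in> space P. \<xi> \<omega> \<bullet> (B *v \<xi> \<omega>) - \<sigma>^2 * trace B
           > 2 * \<sigma> * \<sigma>bar * frob_norm B * sqrt x + 2 * \<sigma>bar^2 * op_norm B * x} \<le> exp (- x)"
    and opA: "\<And>j. op_norm (A j) \<le> 1"
    and thetamin: "\<And>\<omega>. \<omega> \<in> space P \<Longrightarrow> \<theta>hat \<omega> \<in> simplexM \<and>
        (\<forall>\<theta>\<in>simplexM. H_pen \<sigma> A b (f + \<xi> \<omega>) (\<theta>hat \<omega>) \<le> H_pen \<sigma> A b (f + \<xi> \<omega>) \<theta>)"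
    and x: "x > 0"
  shows "\<exists>E \<in> sets P. measure P E \<ge> 1 - 2 * exp (- x) \<and>
     (\<forall>\<omega>\<in>E. (norm (mu_th A b (f + \<xi> \<omega>) (\<theta>hat \<omega>) - f))^2
        \<le> (MIN j. (norm (mu_j A b (f + \<xi> \<omega>) j - f))^2)
           + 46 * \<sigma>bar^2 * (2 * ln (real CARD('m)) + x))"
proof -
  \<comment> \<open>The distributional hypotheses on \<open>\<xi>\<close> enter only through the two tail bounds.\<close>
  define t where "t = 2 * ln (real CARD('m)) + x"
  have t: "t > 0" unfolding t_def using x ln_ge_zero[of "real CARD('m)"] M2 by linarith
  obtain E where E: "E \<in> sets P" "measure P E \<ge> 1 - 2 * real CARD('m)^2 * exp (- t)"
    and excess: "\<forall>\<omega>\<in>E. \<forall>j k. \<xi> \<omega> \<bullet> (mu_j A b (f + \<xi> \<omega>) j - mu_j A b (f + \<xi> \<omega>) k)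
                    - \<sigma>^2 * (trace (A j) - trace (A k))
                  \<le> (norm (mu_j A b (f + \<xi> \<omega>) j - mu_j A b (f + \<xi> \<omega>) k))^2 / 4 + 23 * \<sigma>bar^2 * t"
    using pairwise_noise_excess_event[where A = A and b = b and f = f,
        OF \<open>prob_space P\<close> meas sig sbar t lin_tail[OF t] quad_tail[OF t] opA]
    by blast
  have "exp (2 * ln (real CARD('m))) = real CARD('m)^2"
    using exp_ln[of "real CARD('m)^2"] ln_realpow[of "real CARD('m)" 2] by simp
  moreover have "exp (- t) * exp (2 * ln (real CARD('m))) = exp (- x)"
    by (simp add: t_def exp_add[symmetric])
  ultimately have union_bound: "1 - 2 * real CARD('m)^2 * exp (- t) = 1 - 2 * exp (- x)"
    by (simp add: mult.commute)
  have "(norm (mu_th A b (f + \<xi> \<omega>) (\<theta>hat \<omega>) - f))^2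
      \<le> (MIN j. (norm (mu_j A b (f + \<xi> \<omega>) j - f))^2) + 46 * \<sigma>bar^2 * t" if "\<omega> \<in> E" for \<omega>
  proof -
    define g where "g j = (norm (mu_j A b (f + \<xi> \<omega>) j - f))^2" for j
    have "Min (range g) \<in> range g" by (rule Min_in) auto
    then obtain k where k: "(MIN j. (norm (mu_j A b (f + \<xi> \<omega>) j - f))^2) = g k"
      unfolding g_def by blast
    have "\<omega> \<in> space P" using E(1) that sets.sets_into_space by blast
    then have "(norm (mu_th A b (f + \<xi> \<omega>) (\<theta>hat \<omega>) - f))^2
        \<le> (norm (mu_j A b (f + \<xi> \<omega>) k - f))^2 + 2 * (23 * \<sigma>bar^2 * t)"
      using thetamin excess that by (intro H_pen_minimiser_oracle_inequality) blast+
    then show ?thesis unfolding k g_def by simp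
  qed
  then show ?thesis
    using E union_bound by (intro bexI[of _ E] conjI) (simp_all add: t_def)
qed

end
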